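(* Let $A\in\mathbb{R}^{m\times n}$ be semi-monotone, let $A=P_1-R_1+S_1$ be a double proper weak regular splitting and $A=P_2-R_2+S_2$ a double proper regular splitting of $A$. Suppose $N(S_2)\supseteq N(P_2)$, $R(S_2)\subseteq R(P_2)$, $1\notin\sigma(S_2P_1^{\dagger})$ and $\widehat{A}^{\dagger}\geq 0$, where $\widehat{A}=(I-S_2P_1^{\dagger})A$. If $P_1^{\dagger}R_1\geq P_2^{\dagger}R_2$ and $P_2^{\dagger}S_2\geq P_1^{\dagger}S_1$, then $\rho(W_{12})\leq\rho(T_1)<1$, where $$W_{12}=\begin{pmatrix} P_2^{\dagger}R_2-P_2^{\dagger}S_2P_1^{\dagger}R_1 & P_2^{\dagger}S_2P_1^{\dagger}S_1\\ I & 0\end{pmatrix},\qquad T_1=\begin{pmatrix} P_1^{\dagger}R_1 & -P_1^{\dagger}S_1\\ I&0\end{pmatrix}.$$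
   Context: For $M\in\mathbb{R}^{m\times n}$, $M^{\dagger}$ is its Moore–Penrose inverse, $R(M)$, $N(M)$ its range and null space; inequalities are entrywise; $\rho$ is the spectral radius, $\sigma$ the spectrum. $A$ is semi-monotone if $A^{\dagger}\geq 0$. A double splitting $A=P-R+S$ is a double proper splitting if $R(P)=R(A)$ and $N(P)=N(A)$; it is double proper regular if moreover $P^{\dagger}\geq0$, $R\geq0$, $S\leq0$; double proper weak regular if moreover $P^{\dagger}\geq 0$, $P^{\dagger}R\geq 0$, $P^{\dagger}S\leq 0$. *)

theory Defs
  imports "Jordan_Normal_Form.Spectral_Radius" "Jordan_Normal_Form.Matrix_Kernel"
begin

definition mat_le :: "real mat \<Rightarrow> real mat \<Rightarrow> bool" where
  "mat_le B C \<longleftrightarrow> dim_row B = dim_row C \<and> dim_col B = dim_col C \<and>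
     (\<forall>i < dim_row B. \<forall>j < dim_col B. B $$ (i,j) \<le> C $$ (i,j))"

definition nonneg_mat :: "real mat \<Rightarrow> bool" where
  "nonneg_mat M \<longleftrightarrow> (\<forall>i < dim_row M. \<forall>j < dim_col M. M $$ (i,j) \<ge> 0)"

definition nonpos_mat :: "real mat \<Rightarrow> bool" where
  "nonpos_mat M \<longleftrightarrow> (\<forall>i < dim_row M. \<forall>j < dim_col M. M $$ (i,j) \<le> 0)"

definition mat_range :: "real mat \<Rightarrow> real vec set" where
  "mat_range M = {M *\<^sub>v x | x. x \<in> carrier_vec (dim_col M)}"

definition moore_penrose :: "real mat \<Rightarrow> real mat \<Rightarrow> bool" where
  "moore_penrose M X \<longleftrightarrow> X \<in> carrier_mat (dim_col M) (dim_row M) \<and>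
     M * X * M = M \<and> X * M * X = X \<and>
     transpose_mat (M * X) = M * X \<and> transpose_mat (X * M) = X * M"

definition rspectrum :: "real mat \<Rightarrow> complex set" where
  "rspectrum M = spectrum (map_mat complex_of_real M)"

definition rho :: "real mat \<Rightarrow> real" where
  "rho M = spectral_radius (map_mat complex_of_real M)"

definition double_proper_splitting :: "real mat \<Rightarrow> real mat \<Rightarrow> real mat \<Rightarrow> real mat \<Rightarrow> bool" where
  "double_proper_splitting A P R S \<longleftrightarrow>
     P \<in> carrier_mat (dim_row A) (dim_col A) \<and> R \<in> carrier_mat (dim_row A) (dim_col A) \<and>
     S \<in> carrier_mat (dim_row A) (dim_col A) \<and> A = P - R + S \<and>
     mat_range P = mat_range A \<and> mat_kernel P = mat_kernel A"

definition double_proper_regular :: "real mat \<Rightarrow> real mat \<Rightarrow> real mat \<Rightarrow> real mat \<Rightarrow> real mat \<Rightarrow> bool" where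
  "double_proper_regular A P R S Pd \<longleftrightarrow> double_proper_splitting A P R S \<and> moore_penrose P Pd \<and>
     nonneg_mat Pd \<and> nonneg_mat R \<and> nonpos_mat S"

definition double_proper_weak_regular :: "real mat \<Rightarrow> real mat \<Rightarrow> real mat \<Rightarrow> real mat \<Rightarrow> real mat \<Rightarrow> bool" where
  "double_proper_weak_regular A P R S Pd \<longleftrightarrow> double_proper_splitting A P R S \<and> moore_penrose P Pd \<and>
     nonneg_mat Pd \<and> nonneg_mat (Pd * R) \<and> nonpos_mat (Pd * S)"

end

theory Submission
  imports Defs
begin

(* Write T = [X, -Z; I, 0] for the companion matrix of a double splitting, with X = P\<^sup>\<dagger>R \<ge> 0 and
   Z = P\<^sup>\<dagger>S \<le> 0, so that T is entrywise nonnegative.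

   rho(T1) < 1: if (x, y) is an eigenvector of T1 for an eigenvalue of modulus at least 1, then
   a = |x| and b = |y| satisfy b \<le> a \<le> G a with G = X1 - Z1 = P1\<^sup>\<dagger>(P1 - A) \<ge> 0. Equal ranges and
   kernels give P1\<^sup>\<dagger> + G A\<^sup>\<dagger> = A\<^sup>\<dagger>; with A\<^sup>\<dagger> \<ge> 0 this forces A\<^sup>\<dagger> z \<ge> N a for every N, where
   z is the positive part of (P1 - A) a. Hence a = 0, and then b = 0.

   rho(W12) \<le> rho(T1): for every t between rho(T1) and 1, a Neumann-type series gives a positive u
   with T1 u \<le> t u; the comparison hypotheses turn it into a positive w with W12 w \<le> t w, and such
   a vector bounds the spectral radius of a nonnegative matrix by t (Collatz--Wielandt). *)

section \<open>Entrywise order\<close>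

lemma mult_mat_vec_index_sum:
  fixes M :: "'a :: comm_semiring_0 mat"
  assumes "M \<in> carrier_mat nr nc" and "v \<in> carrier_vec nc" and "i < nr"
  shows "(M *\<^sub>v v) $ i = (\<Sum>j<nc. M $$ (i,j) * v $ j)"
  using assms by (auto simp: scalar_prod_def atLeast0LessThan intro!: sum.cong)

lemma mult_mat_index_sum:
  fixes A B :: "'a :: comm_semiring_0 mat"
  assumes "A \<in> carrier_mat nr k" and "B \<in> carrier_mat k nc" and "i < nr" and "j < nc"
  shows "(A * B) $$ (i,j) = (\<Sum>l<k. A $$ (i,l) * B $$ (l,j))"
  using assms by (auto simp: scalar_prod_def atLeast0LessThan intro!: sum.cong)

lemma mat_mult_nonneg_nonneg:
  assumes "A \<in> carrier_mat nr k" and "B \<in> carrier_mat k nc"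
    and "nonneg_mat A" and "nonneg_mat B"
  shows "nonneg_mat (A * B)"
  using assms unfolding nonneg_mat_def
  by (auto simp: mult_mat_index_sum[OF assms(1,2)] simp del: index_mult_mat(1) intro!: sum_nonneg)

lemma mat_mult_nonneg_nonpos:
  assumes "A \<in> carrier_mat nr k" and "B \<in> carrier_mat k nc"
    and "nonneg_mat A" and "nonpos_mat B"
  shows "nonpos_mat (A * B)"
  using assms unfolding nonneg_mat_def nonpos_mat_def
  by (auto simp: mult_mat_index_sum[OF assms(1,2)] simp del: index_mult_mat(1)
      intro!: sum_nonpos mult_nonneg_nonpos)

lemma mat_mult_nonpos_nonneg:
  assumes "A \<in> carrier_mat nr k" and "B \<in> carrier_mat k nc"
    and "nonpos_mat A" and "nonneg_mat B"
  shows "nonpos_mat (A * B)"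
  using assms unfolding nonneg_mat_def nonpos_mat_def
  by (auto simp: mult_mat_index_sum[OF assms(1,2)] simp del: index_mult_mat(1)
      intro!: sum_nonpos mult_nonpos_nonneg)

lemma mat_mult_nonpos_nonpos:
  assumes "A \<in> carrier_mat nr k" and "B \<in> carrier_mat k nc"
    and "nonpos_mat A" and "nonpos_mat B"
  shows "nonneg_mat (A * B)"
  using assms unfolding nonneg_mat_def nonpos_mat_def
  by (auto simp: mult_mat_index_sum[OF assms(1,2)] simp del: index_mult_mat(1)
      intro!: sum_nonneg mult_nonpos_nonpos)

lemma nonneg_mat_uminus:
  assumes "Z \<in> carrier_mat nr nc" and "nonpos_mat Z"
  shows "nonneg_mat (- Z)"
  using assms unfolding nonneg_mat_def nonpos_mat_def by auto

lemma nonneg_mat_minus_nonpos: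
  assumes "A \<in> carrier_mat nr nc" and "B \<in> carrier_mat nr nc"
    and "nonneg_mat A" and "nonpos_mat B"
  shows "nonneg_mat (A - B)"
  unfolding nonneg_mat_def
proof (intro allI impI)
  fix i j assume "i < dim_row (A - B)" and "j < dim_col (A - B)"
  then have "i < nr" and "j < nc" using assms(2) by auto
  then have "B $$ (i,j) \<le> 0" and "0 \<le> A $$ (i,j)"
    using assms unfolding nonneg_mat_def nonpos_mat_def by auto
  then show "0 \<le> (A - B) $$ (i,j)" using \<open>i < nr\<close> \<open>j < nc\<close> assms(2) by simp
qed

lemma nonneg_mat_pow:
  assumes A: "A \<in> carrier_mat n n" and "nonneg_mat A"
  shows "nonneg_mat (A ^\<^sub>m k)"
proof (induction k)
  case 0
  show ?case using A by (auto simp: nonneg_mat_def)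
next
  case (Suc k)
  have "nonneg_mat (A ^\<^sub>m k * A)"
    by (rule mat_mult_nonneg_nonneg[OF pow_carrier_mat[OF A] A Suc assms(2)])
  then show ?case by simp
qed

lemma le_vec_carrier:
  fixes x y :: "'a :: order vec"
  assumes "x \<in> carrier_vec n" and "x \<le> y"
  shows "y \<in> carrier_vec n"
  using assms unfolding less_eq_vec_def carrier_vec_def by simp

lemma mult_mat_vec_mono:
  fixes M :: "real mat"
  assumes M: "M \<in> carrier_mat nr nc" and nn: "nonneg_mat M"
    and x: "x \<in> carrier_vec nc" and le: "x \<le> y"
  shows "M *\<^sub>v x \<le> M *\<^sub>v y"
proof -
  have y: "y \<in> carrier_vec nc" using le_vec_carrier[OF x le] .
  have "(M *\<^sub>v x) $ i \<le> (M *\<^sub>v y) $ i" if i: "i < nr" for i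
    unfolding mult_mat_vec_index_sum[OF M x i] mult_mat_vec_index_sum[OF M y i]
    using nn le M x i by (intro sum_mono mult_left_mono) (auto simp: nonneg_mat_def less_eq_vec_def)
  then show ?thesis using M x y unfolding less_eq_vec_def by auto
qed

lemma mult_mat_vec_antimono:
  fixes M :: "real mat"
  assumes M: "M \<in> carrier_mat nr nc" and np: "nonpos_mat M"
    and x: "x \<in> carrier_vec nc" and le: "x \<le> y"
  shows "M *\<^sub>v y \<le> M *\<^sub>v x"
proof -
  have y: "y \<in> carrier_vec nc" using le_vec_carrier[OF x le] .
  have "(M *\<^sub>v y) $ i \<le> (M *\<^sub>v x) $ i" if i: "i < nr" for i
    unfolding mult_mat_vec_index_sum[OF M x i] mult_mat_vec_index_sum[OF M y i]
    using np le M x i by (intro sum_mono mult_left_mono_neg) (auto simp: nonpos_mat_def less_eq_vec_def)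
  then show ?thesis using M x y unfolding less_eq_vec_def by auto
qed

lemma mult_mat_vec_nonneg:
  fixes M :: "real mat"
  assumes M: "M \<in> carrier_mat nr nc" and nn: "nonneg_mat M"
    and x: "x \<in> carrier_vec nc" and x_nonneg: "0\<^sub>v nc \<le> x"
  shows "0\<^sub>v nr \<le> M *\<^sub>v x"
proof -
  have "0 \<le> (M *\<^sub>v x) $ i" if i: "i < nr" for i
    unfolding mult_mat_vec_index_sum[OF M x i]
    using nn x_nonneg M i by (intro sum_nonneg mult_nonneg_nonneg) (auto simp: nonneg_mat_def less_eq_vec_def)
  then show ?thesis using M x unfolding less_eq_vec_def by auto
qed

lemma mat_le_mult_vec_mono:
  fixes B C :: "real mat"
  assumes le: "mat_le B C" and B: "B \<in> carrier_mat nr nc"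
    and x: "x \<in> carrier_vec nc" and x_nonneg: "0\<^sub>v nc \<le> x"
  shows "B *\<^sub>v x \<le> C *\<^sub>v x"
proof -
  have C: "C \<in> carrier_mat nr nc" using le B unfolding mat_le_def by auto
  have "(B *\<^sub>v x) $ i \<le> (C *\<^sub>v x) $ i" if i: "i < nr" for i
    unfolding mult_mat_vec_index_sum[OF B x i] mult_mat_vec_index_sum[OF C x i]
    using le x_nonneg B x i by (intro sum_mono mult_right_mono) (auto simp: mat_le_def less_eq_vec_def)
  then show ?thesis using B C x unfolding less_eq_vec_def by auto
qed

section \<open>Spectral radius of nonnegative matrices\<close>

lemma rho_eq_norm_eigenvalue:
  assumes "M \<in> carrier_mat N N" and "0 < N"
  obtains \<mu> where "eigenvalue (map_mat complex_of_real M) \<mu>" and "rho M = norm \<mu>"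
  using spectral_radius_mem_max(1)[of "map_mat complex_of_real M" N] assms
  unfolding rho_def spectrum_def by auto

lemma norm_eigenvalue_le_rho:
  assumes M: "M \<in> carrier_mat N N" and ev: "eigenvalue (map_mat complex_of_real M) \<mu>"
  shows "norm \<mu> \<le> rho M"
proof -
  have cM: "map_mat complex_of_real M \<in> carrier_mat N N" using M by simp
  have "0 < N" using eigenvalue_imp_nonzero_dim[OF cM ev] .
  then show ?thesis
    unfolding rho_def using ev spectral_radius_mem_max(2)[OF cM] by (auto simp: spectrum_def)
qed

lemma rho_nonneg:
  assumes "M \<in> carrier_mat N N" and "0 < N"
  shows "0 \<le> rho M"
  using rho_eq_norm_eigenvalue[OF assms] by force

lemma rho_le_of_eigenvalues_le:
  assumes "M \<in> carrier_mat N N" and "0 < N"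
    and "\<And>\<mu>. eigenvalue (map_mat complex_of_real M) \<mu> \<Longrightarrow> norm \<mu> \<le> t"
  shows "rho M \<le> t"
  using rho_eq_norm_eigenvalue[OF assms(1,2)] assms(3) by metis

lemma eigenvector_norm_subinvariant:
  fixes M :: "real mat"
  assumes M: "M \<in> carrier_mat N N" and nn: "nonneg_mat M"
    and ev: "eigenvector (map_mat complex_of_real M) v \<mu>"
  shows "norm \<mu> \<cdot>\<^sub>v map_vec norm v \<le> M *\<^sub>v map_vec norm v"
proof -
  have v: "v \<in> carrier_vec N" using ev M unfolding eigenvector_def by auto
  have "norm \<mu> * norm (v $ i) \<le> (\<Sum>j<N. M $$ (i,j) * norm (v $ j))" if i: "i < N" for i
  proof -
    have "\<mu> * v $ i = (map_mat complex_of_real M *\<^sub>v v) $ i"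
      using ev i v M unfolding eigenvector_def by auto
    also have "\<dots> = (\<Sum>j<N. complex_of_real (M $$ (i,j)) * v $ j)"
      using M v i by (auto simp: mult_mat_vec_index_sum[of _ N N] simp del: index_mult_mat_vec
          intro!: sum.cong)
    finally have "norm \<mu> * norm (v $ i) = norm (\<Sum>j<N. complex_of_real (M $$ (i,j)) * v $ j)"
      by (metis norm_mult)
    also have "\<dots> \<le> (\<Sum>j<N. norm (complex_of_real (M $$ (i,j)) * v $ j))"
      by (rule norm_sum)
    also have "\<dots> = (\<Sum>j<N. M $$ (i,j) * norm (v $ j))"
      using nn M i unfolding nonneg_mat_def by (auto simp: norm_mult intro!: sum.cong)
    finally show ?thesis .
  qed
  then show ?thesis
    using M v by (auto simp: less_eq_vec_def mult_mat_vec_index_sum[OF M] simp del: index_mult_mat_vec)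
qed

lemma norm_eigenvalue_le_of_subinvariant:
  fixes M :: "real mat"
  assumes M: "M \<in> carrier_mat N N" and nn: "nonneg_mat M"
    and u: "u \<in> carrier_vec N" and u_pos: "\<And>i. i < N \<Longrightarrow> 0 < u $ i"
    and sub: "M *\<^sub>v u \<le> t \<cdot>\<^sub>v u"
    and ev: "eigenvalue (map_mat complex_of_real M) \<mu>"
  shows "norm \<mu> \<le> t"
proof -
  obtain v where evv: "eigenvector (map_mat complex_of_real M) v \<mu>"
    using ev unfolding eigenvalue_def by auto
  have v: "v \<in> carrier_vec N" and "v \<noteq> 0\<^sub>v N" using evv M unfolding eigenvector_def by auto
  then obtain k where k: "k < N" "v $ k \<noteq> 0" by (metis carrier_vecD eq_vecI index_zero_vec)
  define w where "w = map_vec norm v"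
  have w: "w \<in> carrier_vec N" using v unfolding w_def by simp
  define \<tau> where "\<tau> = Max ((\<lambda>j. w $ j / u $ j) ` {..<N})"
  obtain i where i: "i < N" and "w $ i / u $ i = \<tau>"
    using Max_in[of "(\<lambda>j. w $ j / u $ j) ` {..<N}"] k(1) unfolding \<tau>_def by fastforce
  then have wi: "w $ i = \<tau> * u $ i" using u_pos[OF i] by (simp add: field_simps)
  have "w $ j \<le> \<tau> * u $ j" if "j < N" for j
  proof -
    have "w $ j / u $ j \<le> \<tau>" unfolding \<tau>_def using that by simp
    then show ?thesis using u_pos[OF that] by (simp add: pos_divide_le_eq)
  qed
  then have w_le: "w \<le> \<tau> \<cdot>\<^sub>v u" using u w unfolding less_eq_vec_def by auto
  have "0 < w $ k / u $ k" using k u_pos[OF k(1)] v unfolding w_def by simp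
  also have "\<dots> \<le> \<tau>" unfolding \<tau>_def using k by simp
  finally have \<tau>_pos: "0 < \<tau>" .
  have "norm \<mu> \<cdot>\<^sub>v w \<le> M *\<^sub>v w"
    unfolding w_def by (rule eigenvector_norm_subinvariant[OF M nn evv])
  also have "\<dots> \<le> M *\<^sub>v (\<tau> \<cdot>\<^sub>v u)" by (rule mult_mat_vec_mono[OF M nn w w_le])
  also have "\<dots> = \<tau> \<cdot>\<^sub>v (M *\<^sub>v u)" by (rule mult_mat_vec[OF M u])
  finally have "norm \<mu> * w $ i \<le> \<tau> * (M *\<^sub>v u) $ i"
    using i M w unfolding less_eq_vec_def by auto
  also have "\<dots> \<le> \<tau> * (t * u $ i)"
    using sub i u \<tau>_pos unfolding less_eq_vec_def by auto
  also have "\<dots> = t * w $ i" using wi by simp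
  finally show ?thesis using wi \<tau>_pos u_pos[OF i] by simp
qed

lemma rho_le_of_subinvariant:
  fixes M :: "real mat"
  assumes "M \<in> carrier_mat N N" and "0 < N" and "nonneg_mat M"
    and "u \<in> carrier_vec N" and "\<And>i. i < N \<Longrightarrow> 0 < u $ i" and "M *\<^sub>v u \<le> t \<cdot>\<^sub>v u"
  shows "rho M \<le> t"
  using rho_le_of_eigenvalues_le norm_eigenvalue_le_of_subinvariant assms by metis

lemma pow_mat_Suc_left:
  assumes A: "A \<in> carrier_mat n n"
  shows "A ^\<^sub>m Suc k = A * A ^\<^sub>m k"
proof (induction k)
  case 0
  show ?case using A by simp
next
  case (Suc k)
  have "A ^\<^sub>m Suc (Suc k) = (A * A ^\<^sub>m k) * A" using Suc by simp
  also have "\<dots> = A * (A ^\<^sub>m k * A)" using A by (simp add: assoc_mult_mat[of _ n n _ n _ n])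
  finally show ?case by simp
qed

lemma row_sum_pow_mat_Suc:
  fixes M :: "'a :: comm_semiring_1 mat"
  assumes M: "M \<in> carrier_mat N N" and i: "i < N"
  shows "(\<Sum>j<N. (M ^\<^sub>m Suc k) $$ (i,j)) = (\<Sum>l<N. M $$ (i,l) * (\<Sum>j<N. (M ^\<^sub>m k) $$ (l,j)))"
proof -
  have "(\<Sum>j<N. (M ^\<^sub>m Suc k) $$ (i,j)) = (\<Sum>j<N. \<Sum>l<N. M $$ (i,l) * (M ^\<^sub>m k) $$ (l,j))"
    unfolding pow_mat_Suc_left[OF M] using M i
    by (intro sum.cong refl) (simp add: mult_mat_index_sum[OF M pow_carrier_mat[OF M]] del: index_mult_mat(1))
  also have "\<dots> = (\<Sum>l<N. M $$ (i,l) * (\<Sum>j<N. (M ^\<^sub>m k) $$ (l,j)))"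
    by (subst sum.swap) (simp add: sum_distrib_left)
  finally show ?thesis .
qed

text \<open>With row sums \<open>a\<^sub>k\<close> of \<open>M\<^sup>k\<close>, the vector \<open>u = \<Sum>k<K. a\<^sub>k / q\<^sup>k\<close> satisfies
  \<open>M u = q (u - a\<^sub>0 + a\<^sub>K / q\<^sup>K)\<close>, and \<open>a\<^sub>K / q\<^sup>K \<le> 1 = a\<^sub>0\<close> once \<open>q\<^sup>K \<ge> N c\<close>.\<close>
lemma subinvariant_of_bounded_powers:
  fixes M :: "real mat"
  assumes M: "M \<in> carrier_mat N N" and nn: "nonneg_mat M"
    and bd: "\<And>k i j. i < N \<Longrightarrow> j < N \<Longrightarrow> (M ^\<^sub>m k) $$ (i,j) \<le> c" and q: "1 < q"
  obtains u where "u \<in> carrier_vec N" and "\<And>i. i < N \<Longrightarrow> 0 < u $ i" and "M *\<^sub>v u \<le> q \<cdot>\<^sub>v u"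
proof -
  obtain K0 where "real N * c < q ^ K0" using real_arch_pow[OF q] by auto
  define K where "K = Suc K0"
  have "q ^ K0 \<le> q ^ K" unfolding K_def using q by (intro power_increasing) auto
  with \<open>real N * c < q ^ K0\<close> have qK: "real N * c \<le> q ^ K" by linarith
  define a where "a k i = (\<Sum>j<N. (M ^\<^sub>m k) $$ (i,j))" for k i
  have a0: "a 0 i = 1" if "i < N" for i
    using that M by (simp add: a_def one_mat_def sum.delta)
  have a_Suc: "(\<Sum>l<N. M $$ (i,l) * a k l) = a (Suc k) i" if "i < N" for i k
    unfolding a_def using row_sum_pow_mat_Suc[OF M that] by simp
  have a_nonneg: "0 \<le> a k i" if "i < N" for k i
    using nonneg_mat_pow[OF M nn, of k] that M unfolding a_def nonneg_mat_def
    by (auto intro!: sum_nonneg)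
  have aK: "a K i \<le> q ^ K" if "i < N" for i
  proof -
    have "a K i \<le> (\<Sum>j<N. c)" unfolding a_def using bd that by (intro sum_mono) auto
    then show ?thesis using qK by simp
  qed
  define u where "u = vec N (\<lambda>i. \<Sum>k<K. a k i / q ^ k)"
  show thesis
  proof
    show "u \<in> carrier_vec N" unfolding u_def by simp
  next
    fix i assume i: "i < N"
    have "u $ i = a 0 i / q ^ 0 + (\<Sum>k<K0. a (Suc k) i / q ^ Suc k)"
      using i unfolding u_def K_def by (subst sum.lessThan_Suc_shift) simp
    also have "\<dots> \<ge> 1" using a0[OF i] a_nonneg[OF i] q by (auto intro!: sum_nonneg)
    finally show "0 < u $ i" by simp
  next
    have "(M *\<^sub>v u) $ i \<le> q * u $ i" if i: "i < N" for i
    proof -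
      have "(M *\<^sub>v u) $ i = (\<Sum>k<K. (\<Sum>l<N. M $$ (i,l) * a k l) / q ^ k)"
        using M i unfolding u_def
        by (simp add: mult_mat_vec_index_sum[of _ N N] sum_distrib_left sum_divide_distrib
            algebra_simps del: index_mult_mat_vec) (subst sum.swap, simp)
      also have "\<dots> = q * (\<Sum>k<K. a (Suc k) i / q ^ Suc k)"
        using a_Suc[OF i] q by (simp add: sum_distrib_left)
      also have "(\<Sum>k<K. a (Suc k) i / q ^ Suc k) = u $ i + a K i / q ^ K - a 0 i"
      proof -
        have "(\<Sum>k<Suc K. a k i / q ^ k) = a 0 i + (\<Sum>k<K. a (Suc k) i / q ^ Suc k)"
          by (subst sum.lessThan_Suc_shift) simp
        then show ?thesis using i unfolding u_def by simp
      qed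
      also have "\<dots> \<le> u $ i" using aK[OF i] a0[OF i] q by simp
      finally show ?thesis using q by simp
    qed
    then show "M *\<^sub>v u \<le> q \<cdot>\<^sub>v u" using M unfolding less_eq_vec_def u_def by simp
  qed
qed

lemma rho_smult_le:
  fixes M :: "real mat"
  assumes M: "M \<in> carrier_mat N N" and N: "0 < N" and c: "0 < c"
  shows "rho (c \<cdot>\<^sub>m M) \<le> c * rho M"
proof (rule rho_le_of_eigenvalues_le[of _ N])
  fix \<mu> assume "eigenvalue (map_mat complex_of_real (c \<cdot>\<^sub>m M)) \<mu>"
  then obtain v where v: "v \<in> carrier_vec N" "v \<noteq> 0\<^sub>v N"
    and ev: "map_mat complex_of_real (c \<cdot>\<^sub>m M) *\<^sub>v v = \<mu> \<cdot>\<^sub>v v"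
    using M unfolding eigenvalue_def eigenvector_def by auto
  have "map_mat complex_of_real M *\<^sub>v v = (\<mu> / complex_of_real c) \<cdot>\<^sub>v v"
  proof (rule eq_vecI)
    fix i assume "i < dim_vec ((\<mu> / complex_of_real c) \<cdot>\<^sub>v v)"
    then have i: "i < N" using v by simp
    have "complex_of_real c * (map_mat complex_of_real M *\<^sub>v v) $ i
        = (map_mat complex_of_real (c \<cdot>\<^sub>m M) *\<^sub>v v) $ i"
      using M v i by (simp add: mult_mat_vec_index_sum[of _ N N] sum_distrib_left mult.assoc
          del: index_mult_mat_vec)
    then show "(map_mat complex_of_real M *\<^sub>v v) $ i = ((\<mu> / complex_of_real c) \<cdot>\<^sub>v v) $ i"
      using ev i v c by (simp add: field_simps)
  qed (use M v in simp)
  then have "eigenvalue (map_mat complex_of_real M) (\<mu> / complex_of_real c)"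
    using M v unfolding eigenvalue_def eigenvector_def by auto
  then have "norm (\<mu> / complex_of_real c) \<le> rho M" by (rule norm_eigenvalue_le_rho[OF M])
  then show "norm \<mu> \<le> c * rho M" using c by (simp add: norm_divide field_simps)
qed (use M N in auto)

lemma subinvariant_of_rho_less:
  fixes M :: "real mat"
  assumes M: "M \<in> carrier_mat N N" and N: "0 < N" and nn: "nonneg_mat M" and lt: "rho M < t"
  obtains u where "u \<in> carrier_vec N" and "\<And>i. i < N \<Longrightarrow> 0 < u $ i" and "M *\<^sub>v u \<le> t \<cdot>\<^sub>v u"
proof -
  define l where "l = (rho M + t) / 2"
  have l: "0 < l" "rho M < l" "l < t" using rho_nonneg[OF M N] lt unfolding l_def by auto
  define M' where "M' = (1 / l) \<cdot>\<^sub>m M"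
  have M': "M' \<in> carrier_mat N N" unfolding M'_def using M by simp
  have nn': "nonneg_mat M'" using nn l unfolding M'_def nonneg_mat_def by auto
  have "rho M' \<le> rho M / l" using rho_smult_le[OF M N, of "1 / l"] l unfolding M'_def by simp
  also have "\<dots> < 1" using l by simp
  finally have "spectral_radius (map_mat complex_of_real M') < 1" unfolding rho_def .
  then obtain c where c: "\<And>k. norm_bound (map_mat complex_of_real M' ^\<^sub>m k) c"
    using spectral_radius_jnf_norm_bound_less_1_upper_triangular[of _ N] M' by fastforce
  have "(M' ^\<^sub>m k) $$ (i,j) \<le> c" if "i < N" "j < N" for k i j
  proof -
    have "map_mat complex_of_real M' ^\<^sub>m k = map_mat complex_of_real (M' ^\<^sub>m k)"
      by (rule of_real_hom.mat_hom_pow[OF M', symmetric])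
    with c[of k] that M' have "norm (complex_of_real ((M' ^\<^sub>m k) $$ (i,j))) \<le> c"
      unfolding norm_bound_def by auto
    then show ?thesis by simp
  qed
  moreover have "1 < t / l" using l by simp
  ultimately obtain u where u: "u \<in> carrier_vec N" "\<And>i. i < N \<Longrightarrow> 0 < u $ i"
      and sub: "M' *\<^sub>v u \<le> (t / l) \<cdot>\<^sub>v u"
    using subinvariant_of_bounded_powers[OF M' nn'] by metis
  have "M *\<^sub>v u = l \<cdot>\<^sub>v (M' *\<^sub>v u)"
    using M u l unfolding M'_def by (intro eq_vecI) (auto simp: mult_mat_vec_index_sum[of _ N N]
        sum_distrib_left simp del: index_mult_mat_vec)
  also have "\<dots> \<le> t \<cdot>\<^sub>v u" using sub l M u unfolding less_eq_vec_def by (auto simp: field_simps)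
  finally show thesis using that u by blast
qed

section \<open>Proper splittings of semi-monotone matrices\<close>

lemma double_proper_splitting_carrier:
  assumes "double_proper_splitting A P R S" and "moore_penrose P Pd" and "A \<in> carrier_mat m n"
  shows "P \<in> carrier_mat m n" and "R \<in> carrier_mat m n" and "S \<in> carrier_mat m n"
    and "Pd \<in> carrier_mat n m"
  using assms unfolding double_proper_splitting_def moore_penrose_def by auto

lemma mat_eq_by_mult_vec:
  fixes A B :: "'a :: comm_semiring_1 mat"
  assumes A: "A \<in> carrier_mat nr nc" and B: "B \<in> carrier_mat nr nc"
    and eq: "\<And>v. v \<in> carrier_vec nc \<Longrightarrow> A *\<^sub>v v = B *\<^sub>v v"
  shows "A = B"
proof (rule eq_matI)
  fix i j assume i: "i < dim_row B" and j: "j < dim_col B"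
  have "(A *\<^sub>v unit_vec nc j) $ i = (B *\<^sub>v unit_vec nc j) $ i" using eq[of "unit_vec nc j"] by simp
  then show "A $$ (i,j) = B $$ (i,j)" using A B i j by simp
qed (use A B in auto)

lemma mult_pinv_mult_eq_of_kernel_subset:
  fixes U A Ad :: "real mat"
  assumes U: "U \<in> carrier_mat m n" and A: "A \<in> carrier_mat m n" and Ad: "Ad \<in> carrier_mat n m"
    and AAdA: "A * Ad * A = A" and ker: "mat_kernel A \<subseteq> mat_kernel U"
  shows "U * (Ad * A) = U"
proof (rule mat_eq_by_mult_vec[of _ m n])
  fix x :: "real vec" assume x: "x \<in> carrier_vec n"
  define y where "y = Ad *\<^sub>v (A *\<^sub>v x)"
  have y: "y \<in> carrier_vec n" unfolding y_def using Ad A x by simp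
  have "(A * Ad * A) *\<^sub>v x = (A * Ad) *\<^sub>v (A *\<^sub>v x)"
    using A Ad x by (intro assoc_mult_mat_vec) auto
  also have "\<dots> = A *\<^sub>v y" unfolding y_def using A Ad x by (intro assoc_mult_mat_vec) auto
  finally have "A *\<^sub>v y = A *\<^sub>v x" using AAdA by simp
  then have "A *\<^sub>v (x - y) = 0\<^sub>v m"
    using A x y by (simp add: mult_minus_distrib_mat_vec[OF A x y])
  then have "x - y \<in> mat_kernel A" using A x y unfolding mat_kernel_def by auto
  then have "x - y \<in> mat_kernel U" using ker by blast
  then have "U *\<^sub>v x - U *\<^sub>v y = 0\<^sub>v m"
    using U x y unfolding mat_kernel_def by (simp add: mult_minus_distrib_mat_vec[OF U x y])
  then have "(U *\<^sub>v x) $ i = (U *\<^sub>v y) $ i" if i: "i < m" for i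
  proof -
    have "(U *\<^sub>v x - U *\<^sub>v y) $ i = 0" using \<open>U *\<^sub>v x - U *\<^sub>v y = 0\<^sub>v m\<close> i by simp
    then show ?thesis using U y i by simp
  qed
  then have "U *\<^sub>v x = U *\<^sub>v y" using U x y by (intro eq_vecI) auto
  have "U * (Ad * A) *\<^sub>v x = U *\<^sub>v ((Ad * A) *\<^sub>v x)"
    using U Ad A x by (intro assoc_mult_mat_vec[of _ m n]) auto
  also have "\<dots> = U *\<^sub>v y" unfolding y_def using Ad A x by simp
  finally show "U * (Ad * A) *\<^sub>v x = U *\<^sub>v x" using \<open>U *\<^sub>v x = U *\<^sub>v y\<close> by simp
qed (use U A Ad in auto)

lemma pinv_mult_eq_of_range_subset:
  fixes U A Ad :: "real mat"
  assumes U: "U \<in> carrier_mat m n" and A: "A \<in> carrier_mat m n" and Ad: "Ad \<in> carrier_mat n m"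
    and AAdA: "A * Ad * A = A" and ran: "mat_range U \<subseteq> mat_range A"
  shows "A * Ad * U = U"
proof (rule mat_eq_by_mult_vec[of _ m n])
  fix x :: "real vec" assume x: "x \<in> carrier_vec n"
  have "U *\<^sub>v x \<in> mat_range A" using ran U x unfolding mat_range_def by auto
  then obtain y where y: "y \<in> carrier_vec n" "U *\<^sub>v x = A *\<^sub>v y"
    using A unfolding mat_range_def by auto
  have "A * Ad * U *\<^sub>v x = (A * Ad) *\<^sub>v (U *\<^sub>v x)"
    using A Ad U x by (intro assoc_mult_mat_vec) auto
  also have "\<dots> = (A * Ad) *\<^sub>v (A *\<^sub>v y)" using y by simp
  also have "\<dots> = (A * Ad * A) *\<^sub>v y" using A Ad y by (intro assoc_mult_mat_vec[symmetric]) auto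
  finally show "A * Ad * U *\<^sub>v x = U *\<^sub>v x" using AAdA y by simp
qed (use U A Ad in auto)

lemma symmetric_mat_mult_swap:
  fixes P Q :: "'a :: comm_ring_1 mat"
  assumes "P \<in> carrier_mat k k" and "Q \<in> carrier_mat k k"
    and "transpose_mat P = P" and "transpose_mat Q = Q" and "P * Q = Q"
  shows "Q * P = Q"
  using transpose_mult[OF assms(1,2)] assms(3-5) by simp

lemma symmetric_mat_eq_of_mult:
  fixes P Q :: "'a :: comm_ring_1 mat"
  assumes "P \<in> carrier_mat k k" and "Q \<in> carrier_mat k k"
    and "transpose_mat P = P" and "transpose_mat Q = Q" and "P * Q = P" and "Q * P = Q"
  shows "P = Q"
  using transpose_mult[OF assms(1,2)] assms(3-6) by metis

text \<open>\<open>U\<^sup>\<dagger> U = A\<^sup>\<dagger> A\<close> and \<open>U U\<^sup>\<dagger> = A A\<^sup>\<dagger>\<close>, being the orthogonal projections onto the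
  orthogonal complement of the common kernel and onto the common range.\<close>
lemma pinv_splitting_identity:
  fixes U A Ud Ad :: "real mat"
  assumes U: "U \<in> carrier_mat m n" and A: "A \<in> carrier_mat m n"
    and mpU: "moore_penrose U Ud" and mpA: "moore_penrose A Ad"
    and ran: "mat_range U = mat_range A" and ker: "mat_kernel U = mat_kernel A"
  shows "Ud + Ud * (U - A) * Ad = Ad"
proof -
  have Ud: "Ud \<in> carrier_mat n m" and Ad: "Ad \<in> carrier_mat n m"
    using mpU mpA U A unfolding moore_penrose_def by auto
  note U' = mpU[unfolded moore_penrose_def] and A' = mpA[unfolded moore_penrose_def]
  have "U * (Ad * A) = U" and "A * (Ud * U) = A"
    using mult_pinv_mult_eq_of_kernel_subset U A Ud Ad U' A' ker by auto
  then have "Ud * U * (Ad * A) = Ud * U" and "Ad * A * (Ud * U) = Ad * A"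
    using U A Ud Ad by (auto simp: assoc_mult_mat[of _ n m _ n _ n])
  then have UdU: "Ud * U = Ad * A"
    using symmetric_mat_eq_of_mult[of "Ud * U" n "Ad * A"] U A Ud Ad U' A' by auto
  have AAdU: "A * Ad * U = U" and UUdA: "U * Ud * A = A"
    using pinv_mult_eq_of_range_subset U A Ud Ad U' A' ran by auto
  have "A * Ad * (U * Ud) = A * Ad * U * Ud"
    by (rule assoc_mult_mat[of _ m m _ n _ m, symmetric]) (use U A Ud Ad in auto)
  also have "\<dots> = U * Ud" by (simp only: AAdU)
  moreover have "U * Ud * (A * Ad) = U * Ud * A * Ad"
    by (rule assoc_mult_mat[of _ m m _ n _ m, symmetric]) (use U A Ud Ad in auto)
  moreover have "\<dots> = A * Ad" by (simp only: UUdA)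
  ultimately have "A * Ad * (U * Ud) = U * Ud" and "U * Ud * (A * Ad) = A * Ad" by simp_all
  then have "U * Ud * (A * Ad) = U * Ud" and "A * Ad * (U * Ud) = A * Ad"
    using symmetric_mat_mult_swap[of "A * Ad" m "U * Ud"] symmetric_mat_mult_swap[of "U * Ud" m "A * Ad"]
      U A Ud Ad U' A' by auto
  then have UUd: "U * Ud = A * Ad"
    using symmetric_mat_eq_of_mult[of "U * Ud" m "A * Ad"] U A Ud Ad U' A' by auto
  have "Ud * (U - A) * Ad = Ud * U * Ad - Ud * A * Ad"
    using U A Ud Ad by (simp add: mult_minus_distrib_mat[of _ n m] minus_mult_distrib_mat[of _ n n _ _ m])
  also have "Ud * U * Ad = Ad" using UdU A' by simp
  also have "Ud * A * Ad = Ud * (U * Ud)"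
    using UUd Ud A Ad by (simp add: assoc_mult_mat[of _ n m _ n _ m])
  also have "\<dots> = Ud" using U' Ud U by (simp add: assoc_mult_mat[of _ n m _ n _ m])
  finally show ?thesis using Ud Ad by (intro eq_matI) auto
qed

lemma pow_mat_Suc_mult_vec:
  assumes G: "G \<in> carrier_mat n n" and a: "a \<in> carrier_vec n"
  shows "G ^\<^sub>m Suc k *\<^sub>v a = G ^\<^sub>m k *\<^sub>v (G *\<^sub>v a)"
  using assoc_mult_mat_vec[OF pow_carrier_mat[OF G] G a] by simp

lemma superinvariant_pow_mult_vec:
  fixes G :: "real mat"
  assumes G: "G \<in> carrier_mat n n" and nn: "nonneg_mat G"
    and a: "a \<in> carrier_vec n" and sup: "a \<le> G *\<^sub>v a"
  shows "a \<le> G ^\<^sub>m k *\<^sub>v a"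
proof (induction k)
  case 0
  show ?case using G a by simp
next
  case (Suc k)
  have "a \<le> G ^\<^sub>m k *\<^sub>v a" by (fact Suc)
  also have "\<dots> \<le> G ^\<^sub>m k *\<^sub>v (G *\<^sub>v a)"
    by (rule mult_mat_vec_mono[OF pow_carrier_mat[OF G] nonneg_mat_pow[OF G nn] a sup])
  also have "\<dots> = G ^\<^sub>m Suc k *\<^sub>v a" using pow_mat_Suc_mult_vec[OF G a] by simp
  finally show ?case .
qed

lemma subinvariant_pow_mult_vec:
  fixes G :: "real mat"
  assumes G: "G \<in> carrier_mat n n" and nn: "nonneg_mat G"
    and c: "c \<in> carrier_vec n" and sub: "G *\<^sub>v c \<le> c"
  shows "G ^\<^sub>m k *\<^sub>v c \<le> c"
proof (induction k)
  case 0
  show ?case using G c by simp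
next
  case (Suc k)
  have "G ^\<^sub>m Suc k *\<^sub>v c = G ^\<^sub>m k *\<^sub>v (G *\<^sub>v c)" by (rule pow_mat_Suc_mult_vec[OF G c])
  also have "\<dots> \<le> G ^\<^sub>m k *\<^sub>v c"
    by (rule mult_mat_vec_mono[OF pow_carrier_mat[OF G] nonneg_mat_pow[OF G nn] _ sub]) (use G c in simp)
  also have "\<dots> \<le> c" by (fact Suc)
  finally show ?case .
qed

lemma pow_mult_pinv_le:
  fixes G Ud Ad :: "real mat"
  assumes G: "G \<in> carrier_mat n n" and Ud: "Ud \<in> carrier_mat n m" and Ad: "Ad \<in> carrier_mat n m"
    and key: "Ud + G * Ad = Ad" and nn_G: "nonneg_mat G" and nn_Ud: "nonneg_mat Ud"
    and y: "y \<in> carrier_vec m" and y_nonneg: "0\<^sub>v m \<le> y"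
  shows "G ^\<^sub>m k *\<^sub>v (Ad *\<^sub>v y) \<le> Ad *\<^sub>v y"
proof (rule subinvariant_pow_mult_vec[OF G nn_G])
  have split: "Ad *\<^sub>v y = Ud *\<^sub>v y + G *\<^sub>v (Ad *\<^sub>v y)"
  proof -
    have "Ad *\<^sub>v y = (Ud + G * Ad) *\<^sub>v y" using key by simp
    also have "\<dots> = Ud *\<^sub>v y + (G * Ad) *\<^sub>v y"
      using Ud G Ad y by (intro add_mult_distrib_mat_vec[of _ n m]) auto
    also have "(G * Ad) *\<^sub>v y = G *\<^sub>v (Ad *\<^sub>v y)" using G Ad y by (intro assoc_mult_mat_vec) auto
    finally show ?thesis .
  qed
  have Udy: "0\<^sub>v n \<le> Ud *\<^sub>v y" by (rule mult_mat_vec_nonneg[OF Ud nn_Ud y y_nonneg])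
  have "(G *\<^sub>v (Ad *\<^sub>v y)) $ i \<le> (Ad *\<^sub>v y) $ i" if i: "i < n" for i
  proof -
    have "(Ad *\<^sub>v y) $ i = (Ud *\<^sub>v y + G *\<^sub>v (Ad *\<^sub>v y)) $ i" by (simp only: split[symmetric])
    also have "\<dots> = (Ud *\<^sub>v y) $ i + (G *\<^sub>v (Ad *\<^sub>v y)) $ i" using i G by simp
    finally show ?thesis using Udy i Ud y unfolding less_eq_vec_def by simp
  qed
  then show "G *\<^sub>v (Ad *\<^sub>v y) \<le> Ad *\<^sub>v y" using G Ad y unfolding less_eq_vec_def by simp
qed (use Ad y in simp)

lemma fixed_point_lower_bound:
  fixes G :: "real mat"
  assumes G: "G \<in> carrier_mat n n" and nn_G: "nonneg_mat G"
    and a: "a \<in> carrier_vec n" and sup: "a \<le> G *\<^sub>v a"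
    and x: "x \<in> carrier_vec n" and x_eq: "x = G *\<^sub>v a + G *\<^sub>v x" and i: "i < n"
  shows "real N * a $ i + (G ^\<^sub>m N *\<^sub>v x) $ i \<le> x $ i"
proof (induction N)
  case 0
  show ?case using G x i by simp
next
  case (Suc N)
  from x_eq have "G ^\<^sub>m N *\<^sub>v x = G ^\<^sub>m N *\<^sub>v (G *\<^sub>v a + G *\<^sub>v x)" by (rule arg_cong)
  also have "\<dots> = G ^\<^sub>m N *\<^sub>v (G *\<^sub>v a) + G ^\<^sub>m N *\<^sub>v (G *\<^sub>v x)"
    using G a x by (intro mult_add_distrib_mat_vec[of _ n n]) auto
  also have "\<dots> = G ^\<^sub>m Suc N *\<^sub>v a + G ^\<^sub>m Suc N *\<^sub>v x"
    using pow_mat_Suc_mult_vec[OF G a] pow_mat_Suc_mult_vec[OF G x] by simp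
  finally have "G ^\<^sub>m N *\<^sub>v x = G ^\<^sub>m Suc N *\<^sub>v a + G ^\<^sub>m Suc N *\<^sub>v x" .
  moreover have "a $ i \<le> (G ^\<^sub>m Suc N *\<^sub>v a) $ i"
    using superinvariant_pow_mult_vec[OF G nn_G a sup, of "Suc N"] i a
    unfolding less_eq_vec_def by simp
  ultimately show ?case using Suc i G a x by (simp add: algebra_simps)
qed

text \<open>The vector \<open>x = A\<^sup>\<dagger> V a\<close> satisfies \<open>x = G a + G x\<close>, so \<open>x \<ge> N a + G\<^sup>N x\<close> for every \<open>N\<close>,
  while \<open>G\<^sup>N x \<ge> -A\<^sup>\<dagger> z\<^sup>-\<close> for the negative part \<open>z\<^sup>-\<close> of \<open>V a\<close>.\<close>
lemma nonneg_superinvariant_eq_0: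
  fixes G Ud V Ad :: "real mat"
  assumes G: "G \<in> carrier_mat n n" and Ud: "Ud \<in> carrier_mat n m"
    and V: "V \<in> carrier_mat m n" and Ad: "Ad \<in> carrier_mat n m"
    and G_eq: "G = Ud * V" and key: "Ud + G * Ad = Ad"
    and nn_G: "nonneg_mat G" and nn_Ud: "nonneg_mat Ud" and nn_Ad: "nonneg_mat Ad"
    and a: "a \<in> carrier_vec n" and a_nonneg: "0\<^sub>v n \<le> a" and sup: "a \<le> G *\<^sub>v a"
  shows "a = 0\<^sub>v n"
proof -
  define z where "z = V *\<^sub>v a"
  define zp where "zp = vec m (\<lambda>l. max (z $ l) 0)"
  define zn where "zn = vec m (\<lambda>l. max (- z $ l) 0)"
  have zp: "zp \<in> carrier_vec m" "0\<^sub>v m \<le> zp" and zn: "zn \<in> carrier_vec m" "0\<^sub>v m \<le> zn"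
    unfolding zp_def zn_def less_eq_vec_def by auto
  have z_split: "z = zp - zn" unfolding zp_def zn_def z_def using V a by (intro eq_vecI) auto
  define x where "x = Ad *\<^sub>v z"
  have x: "x \<in> carrier_vec n" unfolding x_def z_def using Ad V a by simp
  have "x = (Ud + G * Ad) *\<^sub>v z" unfolding x_def using key by simp
  also have "\<dots> = Ud *\<^sub>v z + (G * Ad) *\<^sub>v z"
    unfolding z_def using Ud G Ad V a by (intro add_mult_distrib_mat_vec[of _ n m]) auto
  also have "(G * Ad) *\<^sub>v z = G *\<^sub>v x"
    unfolding x_def z_def using G Ad V a by (intro assoc_mult_mat_vec) auto
  also have "Ud *\<^sub>v z = G *\<^sub>v a"
    unfolding z_def G_eq using Ud V a by (intro assoc_mult_mat_vec[symmetric]) auto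
  finally have x_eq: "x = G *\<^sub>v a + G *\<^sub>v x" .
  note lower = fixed_point_lower_bound[OF G nn_G a sup x x_eq]
  have x_split: "G ^\<^sub>m N *\<^sub>v x = G ^\<^sub>m N *\<^sub>v (Ad *\<^sub>v zp) - G ^\<^sub>m N *\<^sub>v (Ad *\<^sub>v zn)" for N
    unfolding x_def z_split using G Ad zp zn
    by (simp add: mult_minus_distrib_mat_vec[of _ n m] mult_minus_distrib_mat_vec[of _ n n])
  have "a $ i = 0" if i: "i < n" for i
  proof -
    have "real N * a $ i \<le> x $ i + (Ad *\<^sub>v zn) $ i" for N
    proof -
      have "0\<^sub>v n \<le> G ^\<^sub>m N *\<^sub>v (Ad *\<^sub>v zp)"
        using mult_mat_vec_nonneg[OF pow_carrier_mat[OF G] nonneg_mat_pow[OF G nn_G]]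
          mult_mat_vec_nonneg[OF Ad nn_Ad zp] Ad zp by simp
      moreover have "G ^\<^sub>m N *\<^sub>v (Ad *\<^sub>v zn) \<le> Ad *\<^sub>v zn"
        by (rule pow_mult_pinv_le[OF G Ud Ad key nn_G nn_Ud zn])
      ultimately have "0 \<le> (G ^\<^sub>m N *\<^sub>v (Ad *\<^sub>v zp)) $ i"
          and "(G ^\<^sub>m N *\<^sub>v (Ad *\<^sub>v zn)) $ i \<le> (Ad *\<^sub>v zn) $ i"
        using i G Ad zp zn unfolding less_eq_vec_def by auto
      then have "- (Ad *\<^sub>v zn) $ i \<le> (G ^\<^sub>m N *\<^sub>v x) $ i"
        unfolding x_split using i G by simp
      then show ?thesis using lower[OF i, of N] by linarith
    qed
    then have "a $ i \<le> 0"
      using ex_less_of_nat_mult[of "a $ i" "x $ i + (Ad *\<^sub>v zn) $ i"] by (meson not_le)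
    then show ?thesis using a_nonneg i a unfolding less_eq_vec_def by auto
  qed
  then show ?thesis using a by (intro eq_vecI) auto
qed

section \<open>Block companion matrices\<close>

lemma smult_append_vec:
  "c \<cdot>\<^sub>v (x @\<^sub>v y) = (c \<cdot>\<^sub>v x) @\<^sub>v (c \<cdot>\<^sub>v y)"
  by (intro eq_vecI) auto

lemma map_append_vec:
  "map_vec f (x @\<^sub>v y) = map_vec f x @\<^sub>v map_vec f y"
  by (intro eq_vecI) auto

lemma block_companion_mult_vec:
  fixes X Y :: "'a :: semiring_1 mat"
  assumes "X \<in> carrier_mat n n" and "Y \<in> carrier_mat n n"
    and "x \<in> carrier_vec n" and "y \<in> carrier_vec n"
  shows "four_block_mat X Y (1\<^sub>m n) (0\<^sub>m n n) *\<^sub>v (x @\<^sub>v y) = (X *\<^sub>v x + Y *\<^sub>v y) @\<^sub>v x"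
  using assms by (subst four_block_mat_mult_vec[of _ n n _ n]) auto

lemma nonneg_block_companion:
  assumes "X \<in> carrier_mat n n" and "Y \<in> carrier_mat n n" and "nonneg_mat X" and "nonneg_mat Y"
  shows "nonneg_mat (four_block_mat X Y (1\<^sub>m n) (0\<^sub>m n n))"
  using assms unfolding nonneg_mat_def by auto

text \<open>For an eigenvector \<open>(x, y)\<close> of modulus \<open>\<ge> 1\<close>, the moduli \<open>a = |x|\<close>, \<open>b = |y|\<close> satisfy
  \<open>b \<le> a\<close> and hence \<open>a \<le> X a - Z b \<le> (X - Z) a\<close>.\<close>
lemma rho_block_companion_less_1:
  fixes X Z :: "real mat"
  assumes n: "0 < n" and X: "X \<in> carrier_mat n n" and Z: "Z \<in> carrier_mat n n"
    and nn_X: "nonneg_mat X" and np_Z: "nonpos_mat Z"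
    and no_sup: "\<And>a. a \<in> carrier_vec n \<Longrightarrow> 0\<^sub>v n \<le> a \<Longrightarrow> a \<le> (X - Z) *\<^sub>v a \<Longrightarrow> a = 0\<^sub>v n"
  shows "rho (four_block_mat X (- Z) (1\<^sub>m n) (0\<^sub>m n n)) < 1"
proof (rule ccontr)
  define T where "T = four_block_mat X (- Z) (1\<^sub>m n) (0\<^sub>m n n)"
  have T: "T \<in> carrier_mat (n + n) (n + n)" unfolding T_def using X Z by auto
  have negZ: "- Z \<in> carrier_mat n n" using Z by simp
  have nn_negZ: "nonneg_mat (- Z)" by (rule nonneg_mat_uminus[OF Z np_Z])
  have nn_T: "nonneg_mat T" unfolding T_def by (rule nonneg_block_companion[OF X negZ nn_X nn_negZ])
  assume "\<not> ?thesis"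
  then have "1 \<le> rho T" unfolding T_def by simp
  moreover obtain \<mu> where "eigenvalue (map_mat complex_of_real T) \<mu>" and "rho T = norm \<mu>"
    using rho_eq_norm_eigenvalue[OF T] n by auto
  ultimately obtain v where evv: "eigenvector (map_mat complex_of_real T) v \<mu>" and \<mu>: "1 \<le> norm \<mu>"
    unfolding eigenvalue_def by auto
  have v: "v \<in> carrier_vec (n + n)" "v \<noteq> 0\<^sub>v (n + n)" using evv T unfolding eigenvector_def by auto
  define a where "a = map_vec norm (vec_first v n)"
  define b where "b = map_vec norm (vec_last v n)"
  have a: "a \<in> carrier_vec n" "0\<^sub>v n \<le> a" and b: "b \<in> carrier_vec n" "0\<^sub>v n \<le> b"
    unfolding a_def b_def less_eq_vec_def by auto
  have v_abs: "map_vec norm v = a @\<^sub>v b"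
    unfolding a_def b_def map_append_vec[symmetric] using v by simp
  have "norm \<mu> \<cdot>\<^sub>v (a @\<^sub>v b) \<le> T *\<^sub>v (a @\<^sub>v b)"
    using eigenvector_norm_subinvariant[OF T nn_T evv] unfolding v_abs .
  also have "T *\<^sub>v (a @\<^sub>v b) = (X *\<^sub>v a + (- Z) *\<^sub>v b) @\<^sub>v a"
    unfolding T_def by (rule block_companion_mult_vec[OF X negZ a(1) b(1)])
  finally have top: "norm \<mu> \<cdot>\<^sub>v a \<le> X *\<^sub>v a + (- Z) *\<^sub>v b" and bot: "norm \<mu> \<cdot>\<^sub>v b \<le> a"
    unfolding smult_append_vec
    using append_vec_le[of "norm \<mu> \<cdot>\<^sub>v a" n "X *\<^sub>v a + (- Z) *\<^sub>v b"] a b X Z by auto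
  have scale: "r \<le> norm \<mu> * r" if "0 \<le> r" for r using mult_right_mono[OF \<mu> that] by simp
  have "b $ i \<le> a $ i" if i: "i < n" for i
    using scale[of "b $ i"] bot b a i unfolding less_eq_vec_def by force
  then have b_le_a: "b \<le> a" using a b unfolding less_eq_vec_def by auto
  have "(- Z) *\<^sub>v b \<le> (- Z) *\<^sub>v a" by (rule mult_mat_vec_mono[OF negZ nn_negZ b(1) b_le_a])
  then have "a $ i \<le> ((X - Z) *\<^sub>v a) $ i" if i: "i < n" for i
    using scale[of "a $ i"] top a b X Z i unfolding less_eq_vec_def
    by (force simp: minus_mult_distrib_mat_vec[OF X Z a(1)])
  then have "a \<le> (X - Z) *\<^sub>v a" using X Z a unfolding less_eq_vec_def by auto
  then have "a = 0\<^sub>v n" using no_sup a by blast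
  then have "b = 0\<^sub>v n" using b_le_a b by (simp add: order.antisym)
  then have "map_vec norm v = 0\<^sub>v (n + n)" using v_abs \<open>a = 0\<^sub>v n\<close> by (intro eq_vecI) auto
  then have "v = 0\<^sub>v (n + n)" using v(1) by (intro eq_vecI) (auto dest!: vec_eq_iff[THEN iffD1])
  with v(2) show False ..
qed

lemma block_companion_subinvariant_first_block:
  fixes X Z :: "real mat"
  assumes X: "X \<in> carrier_mat n n" and Z: "Z \<in> carrier_mat n n" and np_Z: "nonpos_mat Z"
    and t: "0 < t" and u1: "u1 \<in> carrier_vec n" and u2: "u2 \<in> carrier_vec n"
    and sub: "four_block_mat X (- Z) (1\<^sub>m n) (0\<^sub>m n n) *\<^sub>v (u1 @\<^sub>v u2) \<le> t \<cdot>\<^sub>v (u1 @\<^sub>v u2)"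
  shows "t \<cdot>\<^sub>v (X *\<^sub>v u1) - Z *\<^sub>v u1 \<le> t\<^sup>2 \<cdot>\<^sub>v u1"
proof -
  have "(X *\<^sub>v u1 + (- Z) *\<^sub>v u2) @\<^sub>v u1 \<le> (t \<cdot>\<^sub>v u1) @\<^sub>v (t \<cdot>\<^sub>v u2)"
    using sub block_companion_mult_vec[of X n "- Z" u1 u2] X Z u1 u2 by (simp add: smult_append_vec)
  then have top: "X *\<^sub>v u1 + (- Z) *\<^sub>v u2 \<le> t \<cdot>\<^sub>v u1" and bot: "u1 \<le> t \<cdot>\<^sub>v u2"
    using append_vec_le[of "X *\<^sub>v u1 + (- Z) *\<^sub>v u2" n "t \<cdot>\<^sub>v u1"] X Z u1 u2 by auto
  have Zu: "Z *\<^sub>v (t \<cdot>\<^sub>v u2) \<le> Z *\<^sub>v u1" by (rule mult_mat_vec_antimono[OF Z np_Z u1 bot])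
  have "t * (X *\<^sub>v u1) $ i - (Z *\<^sub>v u1) $ i \<le> t\<^sup>2 * u1 $ i" if i: "i < n" for i
  proof -
    have "(X *\<^sub>v u1) $ i \<le> t * u1 $ i + (Z *\<^sub>v u2) $ i"
      using top i X Z u1 u2 unfolding less_eq_vec_def by auto
    then have "t * (X *\<^sub>v u1) $ i \<le> t * t * u1 $ i + t * (Z *\<^sub>v u2) $ i"
      using mult_left_mono[of _ _ t] t by (fastforce simp: ring_distribs)
    moreover have "t * (Z *\<^sub>v u2) $ i \<le> (Z *\<^sub>v u1) $ i"
      using Zu i Z u1 u2 unfolding less_eq_vec_def by (auto simp: mult_mat_vec[OF Z u2])
    ultimately show ?thesis unfolding power2_eq_square by linarith
  qed
  then show ?thesis using X Z u1 unfolding less_eq_vec_def by auto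
qed

text \<open>The left-hand side equals \<open>t X\<^sub>2 u\<^sub>1 - Z\<^sub>2 p\<close> with \<open>p = t X\<^sub>1 u\<^sub>1 - Z\<^sub>1 u\<^sub>1 \<le> t\<^sup>2 u\<^sub>1\<close>;
  the comparison hypotheses and \<open>t \<le> 1\<close> bound it by \<open>p\<close> itself.\<close>
lemma block_companion_comparison_top:
  fixes X1 Z1 X2 Z2 :: "real mat"
  assumes X1: "X1 \<in> carrier_mat n n" and Z1: "Z1 \<in> carrier_mat n n"
    and X2: "X2 \<in> carrier_mat n n" and Z2: "Z2 \<in> carrier_mat n n"
    and np_Z1: "nonpos_mat Z1" and np_Z2: "nonpos_mat Z2"
    and X_le: "mat_le X2 X1" and Z_le: "mat_le Z1 Z2"
    and t: "0 < t" "t \<le> 1" and u1: "u1 \<in> carrier_vec n" and u1_nonneg: "0\<^sub>v n \<le> u1"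
    and p_le: "t \<cdot>\<^sub>v (X1 *\<^sub>v u1) - Z1 *\<^sub>v u1 \<le> t\<^sup>2 \<cdot>\<^sub>v u1"
  shows "(X2 - Z2 * X1) *\<^sub>v (t \<cdot>\<^sub>v u1) + (Z2 * Z1) *\<^sub>v u1 \<le> t \<cdot>\<^sub>v (t \<cdot>\<^sub>v u1)"
proof -
  define p where "p = t \<cdot>\<^sub>v (X1 *\<^sub>v u1) - Z1 *\<^sub>v u1"
  have p: "p \<in> carrier_vec n" unfolding p_def using X1 Z1 u1 by simp
  have top_eq: "(X2 - Z2 * X1) *\<^sub>v (t \<cdot>\<^sub>v u1) + (Z2 * Z1) *\<^sub>v u1 = t \<cdot>\<^sub>v (X2 *\<^sub>v u1) - Z2 *\<^sub>v p"
    unfolding p_def using X1 Z1 X2 Z2 u1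
    by (intro eq_vecI) (auto simp: minus_mult_distrib_mat_vec[of _ n n] mult_minus_distrib_mat_vec[of _ n n]
        mult_mat_vec[of _ n n] algebra_simps)
  have Z2p: "Z2 *\<^sub>v (t\<^sup>2 \<cdot>\<^sub>v u1) \<le> Z2 *\<^sub>v p"
    by (rule mult_mat_vec_antimono[OF Z2 np_Z2 p p_le[folded p_def]])
  have X2u: "X2 *\<^sub>v u1 \<le> X1 *\<^sub>v u1" by (rule mat_le_mult_vec_mono[OF X_le X2 u1 u1_nonneg])
  have Z1u2: "Z1 *\<^sub>v u1 \<le> Z2 *\<^sub>v u1" by (rule mat_le_mult_vec_mono[OF Z_le Z1 u1 u1_nonneg])
  have Z1u0: "Z1 *\<^sub>v u1 \<le> Z1 *\<^sub>v 0\<^sub>v n" by (rule mult_mat_vec_antimono[OF Z1 np_Z1 _ u1_nonneg]) simp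
  have "(t \<cdot>\<^sub>v (X2 *\<^sub>v u1) - Z2 *\<^sub>v p) $ i \<le> (t \<cdot>\<^sub>v (t \<cdot>\<^sub>v u1)) $ i" if i: "i < n" for i
  proof -
    have "t\<^sup>2 * (Z2 *\<^sub>v u1) $ i \<le> (Z2 *\<^sub>v p) $ i"
      using Z2p i Z2 u1 p unfolding less_eq_vec_def by (auto simp: mult_mat_vec[OF Z2 u1])
    moreover have "t * (X2 *\<^sub>v u1) $ i \<le> t * (X1 *\<^sub>v u1) $ i"
      using X2u i X1 u1 t unfolding less_eq_vec_def by auto
    moreover have "t\<^sup>2 * (Z1 *\<^sub>v u1) $ i \<le> t\<^sup>2 * (Z2 *\<^sub>v u1) $ i"
      using Z1u2 i Z2 u1 unfolding less_eq_vec_def by (auto intro: mult_left_mono)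
    moreover have "(Z1 *\<^sub>v u1) $ i \<le> t\<^sup>2 * (Z1 *\<^sub>v u1) $ i"
    proof -
      have "(Z1 *\<^sub>v u1) $ i \<le> 0" using Z1u0 i Z1 u1 unfolding less_eq_vec_def by auto
      moreover have "t\<^sup>2 \<le> 1" using t by (simp add: power_le_one)
      ultimately show ?thesis by (simp add: mult_le_cancel_right1)
    qed
    moreover have "t * (X1 *\<^sub>v u1) $ i - (Z1 *\<^sub>v u1) $ i \<le> t\<^sup>2 * u1 $ i"
      using p_le i X1 Z1 u1 unfolding less_eq_vec_def by auto
    ultimately show ?thesis using i X2 Z2 u1 p by (simp add: power2_eq_square)
  qed
  then show ?thesis unfolding top_eq using X2 Z2 u1 p unfolding less_eq_vec_def by auto
qed

text \<open>A positive subinvariant vector \<open>(u\<^sub>1, u\<^sub>2)\<close> of the first companion matrix yields the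
  positive subinvariant vector \<open>(t u\<^sub>1, u\<^sub>1)\<close> of the second one.\<close>
lemma block_companion_subinvariant_transfer:
  fixes X1 Z1 X2 Z2 :: "real mat"
  assumes X1: "X1 \<in> carrier_mat n n" and Z1: "Z1 \<in> carrier_mat n n"
    and X2: "X2 \<in> carrier_mat n n" and Z2: "Z2 \<in> carrier_mat n n"
    and np_Z1: "nonpos_mat Z1" and np_Z2: "nonpos_mat Z2"
    and X_le: "mat_le X2 X1" and Z_le: "mat_le Z1 Z2"
    and t: "0 < t" "t \<le> 1"
    and u: "u \<in> carrier_vec (n + n)" and u_pos: "\<And>i. i < n + n \<Longrightarrow> 0 < u $ i"
    and sub: "four_block_mat X1 (- Z1) (1\<^sub>m n) (0\<^sub>m n n) *\<^sub>v u \<le> t \<cdot>\<^sub>v u"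
  obtains w where "w \<in> carrier_vec (n + n)" and "\<And>i. i < n + n \<Longrightarrow> 0 < w $ i"
    and "four_block_mat (X2 - Z2 * X1) (Z2 * Z1) (1\<^sub>m n) (0\<^sub>m n n) *\<^sub>v w \<le> t \<cdot>\<^sub>v w"
proof
  define u1 where "u1 = vec_first u n"
  define u2 where "u2 = vec_last u n"
  have u1: "u1 \<in> carrier_vec n" and u2: "u2 \<in> carrier_vec n" unfolding u1_def u2_def by auto
  have u_split: "u = u1 @\<^sub>v u2" unfolding u1_def u2_def using u by simp
  have u1_pos: "0 < u1 $ i" if "i < n" for i using u_pos[of i] that unfolding u1_def vec_first_def by simp
  then have u1_nonneg: "0\<^sub>v n \<le> u1" using u1 unfolding less_eq_vec_def by (auto intro: less_imp_le)
  have top: "(X2 - Z2 * X1) *\<^sub>v (t \<cdot>\<^sub>v u1) + (Z2 * Z1) *\<^sub>v u1 \<le> t \<cdot>\<^sub>v (t \<cdot>\<^sub>v u1)"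
    using block_companion_comparison_top[OF X1 Z1 X2 Z2 np_Z1 np_Z2 X_le Z_le t u1 u1_nonneg]
      block_companion_subinvariant_first_block[OF X1 Z1 np_Z1 t(1) u1 u2] sub u_split by simp
  define w where "w = (t \<cdot>\<^sub>v u1) @\<^sub>v u1"
  show "w \<in> carrier_vec (n + n)" unfolding w_def using u1 by simp
  show "0 < w $ i" if "i < n + n" for i using that u1_pos t u1 unfolding w_def by auto
  have "four_block_mat (X2 - Z2 * X1) (Z2 * Z1) (1\<^sub>m n) (0\<^sub>m n n) *\<^sub>v w
      = ((X2 - Z2 * X1) *\<^sub>v (t \<cdot>\<^sub>v u1) + (Z2 * Z1) *\<^sub>v u1) @\<^sub>v (t \<cdot>\<^sub>v u1)"
    unfolding w_def by (rule block_companion_mult_vec) (use X1 X2 Z1 Z2 u1 in auto)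
  also have "\<dots> \<le> (t \<cdot>\<^sub>v (t \<cdot>\<^sub>v u1)) @\<^sub>v (t \<cdot>\<^sub>v u1)"
  proof (subst append_vec_le)
    have "X2 - Z2 * X1 \<in> carrier_mat n n" using Z2 X1 by (simp add: minus_carrier_mat)
    then show "(X2 - Z2 * X1) *\<^sub>v (t \<cdot>\<^sub>v u1) + (Z2 * Z1) *\<^sub>v u1 \<in> carrier_vec n"
      using Z2 Z1 u1 by simp
  qed (use top u1 in auto)
  also have "\<dots> = t \<cdot>\<^sub>v w" unfolding w_def smult_append_vec ..
  finally show "four_block_mat (X2 - Z2 * X1) (Z2 * Z1) (1\<^sub>m n) (0\<^sub>m n n) *\<^sub>v w \<le> t \<cdot>\<^sub>v w" .
qed

lemma rho_block_companion_le:
  fixes X1 Z1 X2 Z2 :: "real mat"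
  assumes n: "0 < n" and X1: "X1 \<in> carrier_mat n n" and Z1: "Z1 \<in> carrier_mat n n"
    and X2: "X2 \<in> carrier_mat n n" and Z2: "Z2 \<in> carrier_mat n n"
    and nn_X1: "nonneg_mat X1" and nn_X2: "nonneg_mat X2"
    and np_Z1: "nonpos_mat Z1" and np_Z2: "nonpos_mat Z2"
    and X_le: "mat_le X2 X1" and Z_le: "mat_le Z1 Z2"
    and conv: "rho (four_block_mat X1 (- Z1) (1\<^sub>m n) (0\<^sub>m n n)) < 1"
  shows "rho (four_block_mat (X2 - Z2 * X1) (Z2 * Z1) (1\<^sub>m n) (0\<^sub>m n n))
      \<le> rho (four_block_mat X1 (- Z1) (1\<^sub>m n) (0\<^sub>m n n))"
proof (rule dense_ge_bounded[OF conv])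
  let ?T = "four_block_mat X1 (- Z1) (1\<^sub>m n) (0\<^sub>m n n)"
  let ?W = "four_block_mat (X2 - Z2 * X1) (Z2 * Z1) (1\<^sub>m n) (0\<^sub>m n n)"
  fix t assume t: "rho ?T < t" "t < 1"
  have T: "?T \<in> carrier_mat (n + n) (n + n)" using X1 Z1 by auto
  have W: "?W \<in> carrier_mat (n + n) (n + n)" using X1 X2 Z1 Z2 by auto
  have nn_T: "nonneg_mat ?T"
    using nonneg_block_companion[of X1 n "- Z1"] nonneg_mat_uminus[OF Z1 np_Z1] X1 Z1 nn_X1 by simp
  have "nonneg_mat (X2 - Z2 * X1)"
    using nonneg_mat_minus_nonpos[OF X2 _ nn_X2 mat_mult_nonpos_nonneg[OF Z2 X1 np_Z2 nn_X1]] Z2 X1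
    by simp
  moreover have "X2 - Z2 * X1 \<in> carrier_mat n n" using Z2 X1 by (simp add: minus_carrier_mat)
  ultimately have nn_W: "nonneg_mat ?W"
    using nonneg_block_companion[of "X2 - Z2 * X1" n "Z2 * Z1"] mat_mult_nonpos_nonpos[OF Z2 Z1 np_Z2 np_Z1]
      Z1 Z2 by simp
  have "0 < t" using t rho_nonneg[OF T] n by linarith
  obtain u where "u \<in> carrier_vec (n + n)" "\<And>i. i < n + n \<Longrightarrow> 0 < u $ i" "?T *\<^sub>v u \<le> t \<cdot>\<^sub>v u"
    using subinvariant_of_rho_less[OF T _ nn_T t(1)] n by auto
  then obtain w where "w \<in> carrier_vec (n + n)" "\<And>i. i < n + n \<Longrightarrow> 0 < w $ i" "?W *\<^sub>v w \<le> t \<cdot>\<^sub>v w"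
    using block_companion_subinvariant_transfer[OF X1 Z1 X2 Z2 np_Z1 np_Z2 X_le Z_le \<open>0 < t\<close>] t
    by auto
  then show "rho ?W \<le> t" using rho_le_of_subinvariant[OF W _ nn_W] n by auto
qed

lemma rho_weak_regular_companion_less_1:
  fixes A Ad P R S Pd :: "real mat"
  assumes n: "0 < n" and A: "A \<in> carrier_mat m n"
    and mpA: "moore_penrose A Ad" and nn_Ad: "nonneg_mat Ad"
    and wr: "double_proper_weak_regular A P R S Pd"
  shows "rho (four_block_mat (Pd * R) (- (Pd * S)) (1\<^sub>m n) (0\<^sub>m n n)) < 1"
proof -
  have sp: "double_proper_splitting A P R S" and mpP: "moore_penrose P Pd" and nn_Pd: "nonneg_mat Pd"
    and nn_X: "nonneg_mat (Pd * R)" and np_Z: "nonpos_mat (Pd * S)"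
    using wr unfolding double_proper_weak_regular_def by auto
  note carr = double_proper_splitting_carrier[OF sp mpP A]
  have Ad: "Ad \<in> carrier_mat n m" using mpA A unfolding moore_penrose_def by auto
  have "A = P - R + S" and ran: "mat_range P = mat_range A" and ker: "mat_kernel P = mat_kernel A"
    using sp unfolding double_proper_splitting_def by auto
  then have "P - A = R - S" using carr by (intro eq_matI) auto
  define G where "G = Pd * (P - A)"
  have V: "P - A \<in> carrier_mat m n" using A by (simp add: minus_carrier_mat)
  have G: "G \<in> carrier_mat n n" unfolding G_def using carr V by simp
  have G_XZ: "G = Pd * R - Pd * S"
    unfolding G_def \<open>P - A = R - S\<close> using carr by (simp add: mult_minus_distrib_mat)
  have X: "Pd * R \<in> carrier_mat n n" and Z: "Pd * S \<in> carrier_mat n n"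
    using carr by (auto intro: mult_carrier_mat)
  have nn_G: "nonneg_mat G" unfolding G_XZ by (rule nonneg_mat_minus_nonpos[OF X Z nn_X np_Z])
  have key: "Pd + G * Ad = Ad"
    using pinv_splitting_identity[OF carr(1) A mpP mpA ran ker] unfolding G_def .
  show ?thesis
  proof (rule rho_block_companion_less_1)
    fix a assume "a \<in> carrier_vec n" "0\<^sub>v n \<le> a" "a \<le> (Pd * R - Pd * S) *\<^sub>v a"
    then show "a = 0\<^sub>v n"
      using nonneg_superinvariant_eq_0[OF G carr(4) V Ad G_def key nn_G nn_Pd nn_Ad] G_XZ by simp
  qed (use n X Z nn_X np_Z in auto)
qed

lemma double_proper_regular_imp_weak_regular:
  assumes "double_proper_regular A P R S Pd" and "A \<in> carrier_mat m n"
  shows "double_proper_weak_regular A P R S Pd"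
proof -
  have sp: "double_proper_splitting A P R S" and mpP: "moore_penrose P Pd"
    and "nonneg_mat Pd" and "nonneg_mat R" and "nonpos_mat S"
    using assms(1) unfolding double_proper_regular_def by auto
  note carr = double_proper_splitting_carrier[OF sp mpP assms(2)]
  have "nonneg_mat (Pd * R)" by (rule mat_mult_nonneg_nonneg[OF carr(4,2)]) fact+
  moreover have "nonpos_mat (Pd * S)" by (rule mat_mult_nonneg_nonpos[OF carr(4,3)]) fact+
  ultimately show ?thesis
    using sp mpP \<open>nonneg_mat Pd\<close> unfolding double_proper_weak_regular_def by blast
qed

lemma double_proper_weak_regular_blocks:
  assumes "double_proper_weak_regular A P R S Pd" and "A \<in> carrier_mat m n"
  shows "Pd \<in> carrier_mat n m" and "R \<in> carrier_mat m n" and "S \<in> carrier_mat m n"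
    and "nonneg_mat (Pd * R)" and "nonpos_mat (Pd * S)"
  using assms double_proper_splitting_carrier[of A P R S Pd m n]
  unfolding double_proper_weak_regular_def by auto

theorem theorem3p4:
  fixes A P1 R1 S1 P2 R2 S2 Ad P1d P2d Ahd :: "real mat" and m n :: nat
  assumes "0 < n"
    and "A \<in> carrier_mat m n"
    and "moore_penrose A Ad" and "nonneg_mat Ad"
    and "double_proper_weak_regular A P1 R1 S1 P1d"
    and "double_proper_regular A P2 R2 S2 P2d"
    and "mat_kernel P2 \<subseteq> mat_kernel S2"
    and "mat_range S2 \<subseteq> mat_range P2"
    and "1 \<notin> rspectrum (S2 * P1d)"
    and "moore_penrose ((1\<^sub>m m - S2 * P1d) * A) Ahd" and "nonneg_mat Ahd"
    and "mat_le (P2d * R2) (P1d * R1)"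
    and "mat_le (P1d * S1) (P2d * S2)"
  shows "rho (four_block_mat (P2d * R2 - P2d * S2 * P1d * R1) (P2d * S2 * P1d * S1) (1\<^sub>m n) (0\<^sub>m n n))
           \<le> rho (four_block_mat (P1d * R1) (- (P1d * S1)) (1\<^sub>m n) (0\<^sub>m n n))
       \<and> rho (four_block_mat (P1d * R1) (- (P1d * S1)) (1\<^sub>m n) (0\<^sub>m n n)) < 1"
proof -
  note n = assms(1) and A = assms(2)
  have "double_proper_weak_regular A P2 R2 S2 P2d"
    by (rule double_proper_regular_imp_weak_regular[OF assms(6) A])
  note B1 = double_proper_weak_regular_blocks[OF assms(5) A]
    and B2 = double_proper_weak_regular_blocks[OF this A]
  have conv: "rho (four_block_mat (P1d * R1) (- (P1d * S1)) (1\<^sub>m n) (0\<^sub>m n n)) < 1"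
    by (rule rho_weak_regular_companion_less_1[OF n A assms(3-5)])
  have assoc: "P2d * S2 * P1d * R1 = P2d * S2 * (P1d * R1)" "P2d * S2 * P1d * S1 = P2d * S2 * (P1d * S1)"
    by (rule assoc_mult_mat[of _ n n _ m _ n]; use B1 B2 in auto)+
  show ?thesis unfolding assoc
    using rho_block_companion_le[OF n _ _ _ _ B1(4) B2(4) B1(5) B2(5) assms(12,13) conv] conv B1 B2
    by simp
qed

end
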